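(* Let $(X,G)$ be a minimal continuous action and $m\in\mathbb{N}$, $m\geq 2$. Then $(X,G)$ is $m$-equicontinuous if and only if $Q_m(X,G)\setminus\Delta^{(m)}(X)=\emptyset$.
   Context: $G$ is a locally compact topological group acting continuously on a compact metric space $(X,d)$; minimal means every orbit is dense. $(X,G)$ is $m$-equicontinuous if for every $x\in X$ and $\varepsilon>0$ there is $\delta>0$ such that for any $x_1,\dots,x_m$ in the open ball $B_\delta(x)$ and every $g\in G$ there exist $i\neq j$ with $d(gx_i,gx_j)<\varepsilon$. A tuple $(x_1,\dots,x_m)\in X^m$ is $m$-regionally proximal if for each $\varepsilon>0$ there exist $x_1',\dots,x_m'\in X$ with $d(x_i,x_i')<\varepsilon$ for all $i$, and $g\in G$ with $d(gx_i',gx_j')<\varepsilon$ for all $i,j$; $Q_m(X,G)$ is the set of such tuples. $\Delta^{(m)}(X)=\{(x_1,\dots,x_m)\in X^m: x_i=x_j$ for some $i\neq j\}$. *)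

theory Defs
  imports "HOL-Analysis.Analysis"
begin

definition continuous_action :: "('g::topological_group_add \<Rightarrow> 'x::metric_space \<Rightarrow> 'x) \<Rightarrow> 'x set \<Rightarrow> bool" where
  "continuous_action act X \<longleftrightarrow>
     (\<forall>g x. x \<in> X \<longrightarrow> act g x \<in> X) \<and>
     (\<forall>x\<in>X. act 0 x = x) \<and>
     (\<forall>g h x. x \<in> X \<longrightarrow> act (g + h) x = act g (act h x)) \<and>
     continuous_on (UNIV \<times> X) (\<lambda>p. act (fst p) (snd p))"

definition minimal_action :: "('g \<Rightarrow> 'x::metric_space \<Rightarrow> 'x) \<Rightarrow> 'x set \<Rightarrow> bool" where
  "minimal_action act X \<longleftrightarrow> (\<forall>x\<in>X. X \<subseteq> closure (range (\<lambda>g. act g x)))"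

definition m_equicontinuous :: "('g \<Rightarrow> 'x::metric_space \<Rightarrow> 'x) \<Rightarrow> 'x set \<Rightarrow> nat \<Rightarrow> bool" where
  "m_equicontinuous act X m \<longleftrightarrow>
     (\<forall>x\<in>X. \<forall>\<epsilon>>0. \<exists>\<delta>>0. \<forall>xs. (\<forall>i<m. xs i \<in> X \<inter> ball x \<delta>) \<longrightarrow>
        (\<forall>g. \<exists>i<m. \<exists>j<m. i \<noteq> j \<and> dist (act g (xs i)) (act g (xs j)) < \<epsilon>))"

text \<open>m-tuples are represented as extensional functions on {..<m}.\<close>
definition Q_m :: "('g \<Rightarrow> 'x::metric_space \<Rightarrow> 'x) \<Rightarrow> 'x set \<Rightarrow> nat \<Rightarrow> (nat \<Rightarrow> 'x) set" where
  "Q_m act X m = {xs \<in> {..<m} \<rightarrow>\<^sub>E X. \<forall>\<epsilon>>0. \<exists>xs' \<in> {..<m} \<rightarrow>\<^sub>E X. \<exists>g.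
      (\<forall>i<m. dist (xs i) (xs' i) < \<epsilon>) \<and>
      (\<forall>i<m. \<forall>j<m. dist (act g (xs' i)) (act g (xs' j)) < \<epsilon>)}"

definition Delta_m :: "'x set \<Rightarrow> nat \<Rightarrow> (nat \<Rightarrow> 'x) set" where
  "Delta_m X m = {xs \<in> {..<m} \<rightarrow>\<^sub>E X. \<exists>i<m. \<exists>j<m. i \<noteq> j \<and> xs i = xs j}"

end

theory Submission
  imports Defs
begin

text \<open>If the tuples are m-equicontinuous, a Lebesgue number of the cover by the equicontinuity
balls makes the defining \<delta> uniform over X. Then an m-regionally proximal tuple y with distinct
entries gives a contradiction. Pulling the clustered approximating tuple back by the inverse group
element forces two of its entries, hence two entries of y, to be closer than any given bound.
Conversely, a failure of m-equicontinuity at x yields tuples converging to the constant tuple at x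
whose images under some group elements stay \<epsilon>-separated. A limit of a subsequence of these
images is m-regionally proximal and off the diagonal.\<close>

lemma continuous_action_inverse_cancel:
  assumes "continuous_action act X" "p \<in> X"
  shows "act (-g) (act g p) = p"
  using assms unfolding continuous_action_def by (metis add.left_inverse)

lemma continuous_action_closed:
  assumes "continuous_action act X" "p \<in> X"
  shows "act g p \<in> X"
  using assms unfolding continuous_action_def by blast

lemma compact_imp_common_convergent_subseq:
  fixes f :: "nat \<Rightarrow> nat \<Rightarrow> 'x::metric_space"
  assumes "compact X" "\<And>n i. i < k \<Longrightarrow> f n i \<in> X"
  shows "\<exists>r l. strict_mono r \<and> (\<forall>i<k. l i \<in> X \<and> (\<lambda>n. f (r n) i) \<longlonglongrightarrow> l i)"
  using assms(2)
proof (induction k)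
  case 0
  show ?case by (intro exI[of _ id]) (auto simp: strict_mono_def)
next
  case (Suc k)
  have "\<exists>r l. strict_mono r \<and> (\<forall>i<k. l i \<in> X \<and> (\<lambda>n. f (r n) i) \<longlonglongrightarrow> l i)"
    using Suc.prems by (intro Suc.IH) simp
  then obtain r l where r: "strict_mono r" and l: "\<forall>i<k. l i \<in> X \<and> (\<lambda>n. f (r n) i) \<longlonglongrightarrow> l i"
    by blast
  have "\<forall>n. f (r n) k \<in> X" using Suc.prems by simp
  then obtain a r' where a: "a \<in> X" "strict_mono r'" "((\<lambda>n. f (r n) k) \<circ> r') \<longlonglongrightarrow> a"
    using compact_imp_seq_compact[OF assms(1)] unfolding seq_compact_def by metis
  have "\<forall>i<Suc k. (l(k := a)) i \<in> X \<and> (\<lambda>n. f ((r \<circ> r') n) i) \<longlonglongrightarrow> (l(k := a)) i"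
  proof (intro allI impI)
    fix i assume "i < Suc k"
    then consider "i = k" | "i < k" by linarith
    then show "(l(k := a)) i \<in> X \<and> (\<lambda>n. f ((r \<circ> r') n) i) \<longlonglongrightarrow> (l(k := a)) i"
    proof cases
      case 2
      then show ?thesis using l LIMSEQ_subseq_LIMSEQ[OF _ a(2), of "\<lambda>n. f (r n) i"]
        by (simp add: o_def)
    qed (use a in \<open>simp add: o_def\<close>)
  qed
  with strict_mono_o[OF r a(2)] show ?case by (intro exI[of _ "r \<circ> r'"] exI[of _ "l(k := a)"] conjI)
qed

lemma finite_inj_on_separated:
  fixes y :: "'i \<Rightarrow> 'x::metric_space"
  assumes "finite I" "inj_on y I"
  obtains e where "e > 0" "\<And>i j. i \<in> I \<Longrightarrow> j \<in> I \<Longrightarrow> i \<noteq> j \<Longrightarrow> e \<le> dist (y i) (y j)"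
proof -
  define D where "D = (\<lambda>(i, j). dist (y i) (y j)) ` {(i, j) \<in> I \<times> I. i \<noteq> j}"
  have "finite D" using assms(1) unfolding D_def by (auto intro: finite_subset[of _ "I \<times> I"])
  moreover have "\<forall>d\<in>D. d > 0" using assms(2) unfolding D_def by (auto simp: inj_on_def)
  ultimately have "Min (insert 1 D) > 0" by simp
  moreover have "Min (insert 1 D) \<le> dist (y i) (y j)" if "i \<in> I" "j \<in> I" "i \<noteq> j" for i j
    using \<open>finite D\<close> that unfolding D_def by (intro Min_le) auto
  ultimately show thesis using that by blast
qed

lemma m_equicontinuous_uniformly:
  assumes "compact X" "m_equicontinuous act X m" "0 < m" "\<epsilon> > 0"
  obtains \<delta> where "\<delta> > 0"
    "\<And>xs g. (\<forall>i<m. xs i \<in> X) \<Longrightarrow> (\<forall>i<m. \<forall>j<m. dist (xs i) (xs j) < \<delta>) \<Longrightarrow>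
       \<exists>i<m. \<exists>j<m. i \<noteq> j \<and> dist (act g (xs i)) (act g (xs j)) < \<epsilon>"
proof -
  have "\<forall>z\<in>X. \<exists>\<delta>>0. \<forall>xs. (\<forall>i<m. xs i \<in> X \<inter> ball z \<delta>) \<longrightarrow>
      (\<forall>g. \<exists>i<m. \<exists>j<m. i \<noteq> j \<and> dist (act g (xs i)) (act g (xs j)) < \<epsilon>)"
    using assms(2,4) unfolding m_equicontinuous_def by blast
  then obtain d where d: "\<forall>z\<in>X. d z > 0 \<and> (\<forall>xs. (\<forall>i<m. xs i \<in> X \<inter> ball z (d z)) \<longrightarrow>
      (\<forall>g. \<exists>i<m. \<exists>j<m. i \<noteq> j \<and> dist (act g (xs i)) (act g (xs j)) < \<epsilon>))"
    by (rule bchoice[THEN exE]) blast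
  have "X \<subseteq> \<Union>((\<lambda>z. ball z (d z)) ` X)" using d by force
  then obtain e where "e > 0" and e: "\<And>w. w \<in> X \<Longrightarrow> \<exists>z\<in>X. ball w e \<subseteq> ball z (d z)"
    using Heine_Borel_lemma[OF assms(1)] by (metis (no_types, lifting) imageE open_ball)
  have "\<exists>i<m. \<exists>j<m. i \<noteq> j \<and> dist (act g (xs i)) (act g (xs j)) < \<epsilon>"
    if X: "\<forall>i<m. xs i \<in> X" and close: "\<forall>i<m. \<forall>j<m. dist (xs i) (xs j) < e" for xs g
  proof -
    obtain z where "z \<in> X" "ball (xs 0) e \<subseteq> ball z (d z)" using e X assms(3) by blast
    moreover have "\<forall>i<m. xs i \<in> ball (xs 0) e" using close assms(3) by simp
    ultimately have "\<forall>i<m. xs i \<in> X \<inter> ball z (d z)" using X by blast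
    with d \<open>z \<in> X\<close> show ?thesis by blast
  qed
  with \<open>e > 0\<close> show thesis using that by blast
qed

lemma Q_m_memberI_sequentially:
  assumes "L \<in> {..<m} \<rightarrow>\<^sub>E X" "\<And>n i. i < m \<Longrightarrow> z n i \<in> X"
    and "\<And>i. i < m \<Longrightarrow> (\<lambda>n. z n i) \<longlonglongrightarrow> L i"
    and "\<And>i j. i < m \<Longrightarrow> j < m \<Longrightarrow> (\<lambda>n. dist (act (h n) (z n i)) (act (h n) (z n j))) \<longlonglongrightarrow> 0"
  shows "L \<in> Q_m act X m"
  unfolding Q_m_def mem_Collect_eq
proof (intro conjI assms(1) allI impI)
  fix \<eta> :: real assume "\<eta> > 0"
  have "\<forall>i\<in>{..<m}. eventually (\<lambda>n. dist (z n i) (L i) < \<eta>) sequentially"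
    using assms(3) \<open>\<eta> > 0\<close> by (auto intro: tendstoD)
  moreover have "\<forall>i\<in>{..<m}. \<forall>j\<in>{..<m}.
      eventually (\<lambda>n. dist (act (h n) (z n i)) (act (h n) (z n j)) < \<eta>) sequentially"
    using tendstoD[OF assms(4) \<open>\<eta> > 0\<close>] by (simp add: dist_real_def)
  ultimately have "eventually (\<lambda>n. \<forall>i\<in>{..<m}. dist (z n i) (L i) < \<eta> \<and>
      (\<forall>j\<in>{..<m}. dist (act (h n) (z n i)) (act (h n) (z n j)) < \<eta>)) sequentially"
    by (intro eventually_ball_finite eventually_conj ballI) auto
  then obtain n where n: "\<forall>i<m. dist (z n i) (L i) < \<eta> \<and>
      (\<forall>j<m. dist (act (h n) (z n i)) (act (h n) (z n j)) < \<eta>)"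
    by (auto simp: eventually_sequentially)
  show "\<exists>xs'\<in>{..<m} \<rightarrow>\<^sub>E X. \<exists>g. (\<forall>i<m. dist (L i) (xs' i) < \<eta>) \<and>
      (\<forall>i<m. \<forall>j<m. dist (act g (xs' i)) (act g (xs' j)) < \<eta>)"
    using n assms(2) by (intro bexI[of _ "restrict (z n) {..<m}"] exI[of _ "h n"])
      (auto simp: dist_commute)
qed

lemma not_m_equicontinuous_sequences:
  assumes "\<not> m_equicontinuous act X m"
  obtains x \<epsilon> xs g where "x \<in> X" "\<epsilon> > 0" "\<And>n i. i < m \<Longrightarrow> xs n i \<in> X"
    "\<And>i. i < m \<Longrightarrow> (\<lambda>n. xs n i) \<longlonglongrightarrow> x"
    "\<And>n i j. i < m \<Longrightarrow> j < m \<Longrightarrow> i \<noteq> j \<Longrightarrow> \<epsilon> \<le> dist (act (g n) (xs n i)) (act (g n) (xs n j))"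
proof -
  obtain x \<epsilon> where "x \<in> X" "\<epsilon> > 0" and not_uniform:
      "\<not> (\<exists>\<delta>>0. \<forall>xs. (\<forall>i<m. xs i \<in> X \<inter> ball x \<delta>) \<longrightarrow>
        (\<forall>g. \<exists>i<m. \<exists>j<m. i \<noteq> j \<and> dist (act g (xs i)) (act g (xs j)) < \<epsilon>))"
    using assms unfolding m_equicontinuous_def by (auto simp only: ball_simps not_all not_imp)
  have "\<exists>xs g. (\<forall>i<m. xs i \<in> X \<inter> ball x (inverse (Suc n))) \<and>
      (\<forall>i<m. \<forall>j<m. i \<noteq> j \<longrightarrow> \<epsilon> \<le> dist (act g (xs i)) (act g (xs j)))" for n
    using not_uniform by (metis leI inverse_positive_iff_positive of_nat_0_less_iff zero_less_Suc)
  then obtain xs g where xsg: "\<And>n. (\<forall>i<m. xs n i \<in> X \<inter> ball x (inverse (Suc n))) \<and>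
      (\<forall>i<m. \<forall>j<m. i \<noteq> j \<longrightarrow> \<epsilon> \<le> dist (act (g n) (xs n i)) (act (g n) (xs n j)))"
    by metis
  have to_x: "(\<lambda>n. xs n i) \<longlonglongrightarrow> x" if "i < m" for i
  proof (rule tendsto_sandwich[of "\<lambda>_. 0" _ _ "\<lambda>n. inverse (real (Suc n))",
        THEN tendsto_dist_iff[THEN iffD2]])
    show "\<forall>\<^sub>F n in sequentially. dist (xs n i) x \<le> inverse (real (Suc n))"
      using xsg that by (auto simp: dist_commute intro!: always_eventually less_imp_le)
    show "(\<lambda>n. inverse (real (Suc n))) \<longlonglongrightarrow> 0" by (rule LIMSEQ_inverse_real_of_nat)
  qed simp_all
  show thesis
    by (rule that[of x \<epsilon> xs g]) (use \<open>x \<in> X\<close> \<open>\<epsilon> > 0\<close> xsg to_x in auto)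
qed

lemma m_equicontinuous_imp_Q_m_subset_Delta_m:
  assumes "compact X" "continuous_action act X" "0 < m" "m_equicontinuous act X m"
  shows "Q_m act X m \<subseteq> Delta_m X m"
proof
  fix y assume "y \<in> Q_m act X m"
  then have y: "y \<in> {..<m} \<rightarrow>\<^sub>E X" and proximal: "\<forall>\<eta>>0. \<exists>y'\<in>{..<m} \<rightarrow>\<^sub>E X. \<exists>g.
      (\<forall>i<m. dist (y i) (y' i) < \<eta>) \<and> (\<forall>i<m. \<forall>j<m. dist (act g (y' i)) (act g (y' j)) < \<eta>)"
    unfolding Q_m_def by auto
  show "y \<in> Delta_m X m"
  proof (rule ccontr)
    assume "y \<notin> Delta_m X m"
    with y have "inj_on y {..<m}" unfolding Delta_m_def inj_on_def by auto
    then obtain e where "e > 0" and sep: "\<And>i j. i < m \<Longrightarrow> j < m \<Longrightarrow> i \<noteq> j \<Longrightarrow> e \<le> dist (y i) (y j)"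
      using finite_inj_on_separated[of "{..<m}" y] by auto
    obtain \<delta> where "\<delta> > 0" and \<delta>: "\<And>xs g. (\<forall>i<m. xs i \<in> X) \<Longrightarrow> (\<forall>i<m. \<forall>j<m. dist (xs i) (xs j) < \<delta>) \<Longrightarrow>
        \<exists>i<m. \<exists>j<m. i \<noteq> j \<and> dist (act g (xs i)) (act g (xs j)) < e / 2"
      using assms(3) m_equicontinuous_uniformly[OF assms(1,4) _ half_gt_zero[OF \<open>e > 0\<close>]] by blast
    have "min \<delta> (e / 4) > 0" using \<open>\<delta> > 0\<close> \<open>e > 0\<close> by simp
    with proximal obtain y' g where y': "y' \<in> {..<m} \<rightarrow>\<^sub>E X"
      and near: "\<forall>i<m. dist (y i) (y' i) < min \<delta> (e / 4)"
      and clustered: "\<forall>i<m. \<forall>j<m. dist (act g (y' i)) (act g (y' j)) < min \<delta> (e / 4)"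
      by blast
    have y'X: "\<forall>i<m. y' i \<in> X" using y' by auto
    then have "\<forall>i<m. act g (y' i) \<in> X" using continuous_action_closed[OF assms(2)] by blast
    then obtain i j where ij: "i < m" "j < m" "i \<noteq> j"
      and "dist (act (-g) (act g (y' i))) (act (-g) (act g (y' j))) < e / 2"
      using \<delta>[of "\<lambda>i. act g (y' i)" "-g"] clustered by auto
    then have "dist (y' i) (y' j) < e / 2"
      using y'X continuous_action_inverse_cancel[OF assms(2)] by simp
    moreover have "dist (y i) (y j) \<le> dist (y i) (y' i) + dist (y' i) (y' j) + dist (y j) (y' j)"
      using dist_triangle[of "y i" "y j" "y' i"] dist_triangle[of "y' i" "y j" "y' j"]
      by (simp add: dist_commute)
    moreover have "dist (y i) (y' i) < e / 4" "dist (y j) (y' j) < e / 4" using near ij by auto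
    ultimately show False using sep[OF ij] by linarith
  qed
qed

lemma Q_m_subset_Delta_m_imp_m_equicontinuous:
  assumes "compact X" "continuous_action act X" "Q_m act X m \<subseteq> Delta_m X m"
  shows "m_equicontinuous act X m"
proof (rule ccontr)
  assume "\<not> m_equicontinuous act X m"
  then obtain x \<epsilon> xs g where "x \<in> X" "\<epsilon> > 0" and xs: "\<And>n i. i < m \<Longrightarrow> xs n i \<in> X"
    and to_x: "\<And>i. i < m \<Longrightarrow> (\<lambda>n. xs n i) \<longlonglongrightarrow> x"
    and sep: "\<And>n i j. i < m \<Longrightarrow> j < m \<Longrightarrow> i \<noteq> j \<Longrightarrow> \<epsilon> \<le> dist (act (g n) (xs n i)) (act (g n) (xs n j))"
    using not_m_equicontinuous_sequences by metis
  define z where "z n i = act (g n) (xs n i)" for n i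
  have zX: "\<And>n i. i < m \<Longrightarrow> z n i \<in> X"
    unfolding z_def using xs continuous_action_closed[OF assms(2)] by blast
  obtain r l where r: "strict_mono r" and l: "\<forall>i<m. l i \<in> X \<and> (\<lambda>n. z (r n) i) \<longlonglongrightarrow> l i"
    using compact_imp_common_convergent_subseq[where f = z and k = m, OF assms(1) zX] by blast
  have "restrict l {..<m} \<in> Q_m act X m"
  proof (rule Q_m_memberI_sequentially[where z = "\<lambda>n. z (r n)" and h = "\<lambda>n. - g (r n)"])
    fix i j assume "i < m" "j < m"
    then have "(\<lambda>n. dist (xs (r n) i) (xs (r n) j)) \<longlonglongrightarrow> dist x x"
      using to_x LIMSEQ_subseq_LIMSEQ[OF _ r] by (intro tendsto_dist) (auto simp: o_def)
    then show "(\<lambda>n. dist (act (- g (r n)) (z (r n) i)) (act (- g (r n)) (z (r n) j))) \<longlonglongrightarrow> 0"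
      using \<open>i < m\<close> \<open>j < m\<close> xs continuous_action_inverse_cancel[OF assms(2)] by (simp add: z_def)
  qed (use l zX in auto)
  moreover have "\<epsilon> \<le> dist (l i) (l j)" if "i < m" "j < m" "i \<noteq> j" for i j
  proof (rule LIMSEQ_le_const)
    show "(\<lambda>n. dist (z (r n) i) (z (r n) j)) \<longlonglongrightarrow> dist (l i) (l j)"
      using l that by (intro tendsto_dist) auto
  qed (use sep that in \<open>auto simp: z_def\<close>)
  then have "restrict l {..<m} \<notin> Delta_m X m"
    using \<open>\<epsilon> > 0\<close> unfolding Delta_m_def by force
  ultimately show False using assms(3) by blast
qed

theorem theorem4p6:
  fixes act :: "'g::{topological_group_add, t2_space} \<Rightarrow> 'x::metric_space \<Rightarrow> 'x"
    and X :: "'x set" and m :: nat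
  assumes "locally_compact_space (euclidean :: 'g topology)"
    and "compact X"
    and "continuous_action act X"
    and "minimal_action act X"
    and "m \<ge> 2"
  shows "m_equicontinuous act X m \<longleftrightarrow> Q_m act X m - Delta_m X m = {}"
proof -
  have "0 < m" using assms(5) by simp
  then show ?thesis
    unfolding Diff_eq_empty_iff
    using m_equicontinuous_imp_Q_m_subset_Delta_m[OF assms(2,3)]
      Q_m_subset_Delta_m_imp_m_equicontinuous[OF assms(2,3)]
    by blast
qed

end
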